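(* Let $\mathcal{E}$ be a right exact category satisfying axiom R3. Suppose given a commutative diagram with rows $A\xrightarrow{\alpha}B\xrightarrow{\beta}C$, $X\to Y\to Z$, $A\xrightarrow{\alpha}B\xrightarrow{\beta}C$ and vertical morphisms $A\to X\to A$, $B\to Y\to B$, $C\to Z\to C$ whose composites are the identities of $A$, $B$, $C$ respectively. If $X\to Y\to Z$ is a conflation, then $A\xrightarrow{\alpha}B\xrightarrow{\beta}C$ is a conflation.
   Context: A conflation category is an additive category with a class of kernel-cokernel pairs (conflations; kernel part = inflation, cokernel part = deflation) closed under isomorphism. It is right exact if $1_0$ is a deflation, deflations compose, and pullbacks of deflations along arbitrary morphisms exist and are deflations. Axiom R3: if $i\colon A\to B$ and $p\colon B\to C$ are morphisms such that $p$ has a kernel and $p\circ i$ is a deflation, then $p$ is a deflation. *)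

theory Defs
  imports Main
begin

record ('o, 'm) addcat =
  Obj  :: "'o set"
  Arr  :: "'m set"
  Dom  :: "'m \<Rightarrow> 'o"
  Cod  :: "'m \<Rightarrow> 'o"
  Id   :: "'o \<Rightarrow> 'm"
  Comp :: "'m \<Rightarrow> 'm \<Rightarrow> 'm"   (* Comp g f = g \<circ> f, defined when Cod f = Dom g *)
  Add  :: "'m \<Rightarrow> 'm \<Rightarrow> 'm"
  Neg  :: "'m \<Rightarrow> 'm"
  Zero :: "'o \<Rightarrow> 'o \<Rightarrow> 'm"

definition hom :: "('o, 'm) addcat \<Rightarrow> 'o \<Rightarrow> 'o \<Rightarrow> 'm set" where
  "hom C a b = {f \<in> Arr C. Dom C f = a \<and> Cod C f = b}"

definition category :: "('o, 'm) addcat \<Rightarrow> bool" where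
  "category C \<longleftrightarrow>
     (\<forall>f \<in> Arr C. Dom C f \<in> Obj C \<and> Cod C f \<in> Obj C) \<and>
     (\<forall>a \<in> Obj C. Id C a \<in> hom C a a) \<and>
     (\<forall>a \<in> Obj C. \<forall>b \<in> Obj C. \<forall>c \<in> Obj C. \<forall>f \<in> hom C a b. \<forall>g \<in> hom C b c.
        Comp C g f \<in> hom C a c) \<and>
     (\<forall>a \<in> Obj C. \<forall>b \<in> Obj C. \<forall>f \<in> hom C a b.
        Comp C (Id C b) f = f \<and> Comp C f (Id C a) = f) \<and>
     (\<forall>a \<in> Obj C. \<forall>b \<in> Obj C. \<forall>c \<in> Obj C. \<forall>d \<in> Obj C.
        \<forall>f \<in> hom C a b. \<forall>g \<in> hom C b c. \<forall>h \<in> hom C c d.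
        Comp C h (Comp C g f) = Comp C (Comp C h g) f)"

definition preadditive :: "('o, 'm) addcat \<Rightarrow> bool" where
  "preadditive C \<longleftrightarrow> category C \<and>
     (\<forall>a \<in> Obj C. \<forall>b \<in> Obj C.
        Zero C a b \<in> hom C a b \<and>
        (\<forall>f \<in> hom C a b. Add C f (Zero C a b) = f \<and> Neg C f \<in> hom C a b \<and>
            Add C f (Neg C f) = Zero C a b) \<and>
        (\<forall>f \<in> hom C a b. \<forall>g \<in> hom C a b. Add C f g \<in> hom C a b \<and> Add C f g = Add C g f) \<and>
        (\<forall>f \<in> hom C a b. \<forall>g \<in> hom C a b. \<forall>h \<in> hom C a b.
            Add C (Add C f g) h = Add C f (Add C g h))) \<and>
     (\<forall>a \<in> Obj C. \<forall>b \<in> Obj C. \<forall>c \<in> Obj C.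
        \<forall>f \<in> hom C a b. \<forall>g \<in> hom C a b. \<forall>h \<in> hom C b c.
          Comp C h (Add C f g) = Add C (Comp C h f) (Comp C h g)) \<and>
     (\<forall>a \<in> Obj C. \<forall>b \<in> Obj C. \<forall>c \<in> Obj C.
        \<forall>k \<in> hom C a b. \<forall>f \<in> hom C b c. \<forall>g \<in> hom C b c.
          Comp C (Add C f g) k = Add C (Comp C f k) (Comp C g k))"

definition zero_object :: "('o, 'm) addcat \<Rightarrow> 'o \<Rightarrow> bool" where
  "zero_object C z \<longleftrightarrow> z \<in> Obj C \<and>
     (\<forall>a \<in> Obj C. (\<exists>!f. f \<in> hom C z a) \<and> (\<exists>!f. f \<in> hom C a z))"

definition is_biproduct ::
  "('o, 'm) addcat \<Rightarrow> 'o \<Rightarrow> 'o \<Rightarrow> 'o \<Rightarrow> 'm \<Rightarrow> 'm \<Rightarrow> 'm \<Rightarrow> 'm \<Rightarrow> bool" where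
  "is_biproduct C a b s i1 i2 p1 p2 \<longleftrightarrow> s \<in> Obj C \<and>
     i1 \<in> hom C a s \<and> i2 \<in> hom C b s \<and> p1 \<in> hom C s a \<and> p2 \<in> hom C s b \<and>
     Comp C p1 i1 = Id C a \<and> Comp C p2 i2 = Id C b \<and>
     Comp C p1 i2 = Zero C b a \<and> Comp C p2 i1 = Zero C a b \<and>
     Add C (Comp C i1 p1) (Comp C i2 p2) = Id C s"

definition additive :: "('o, 'm) addcat \<Rightarrow> bool" where
  "additive C \<longleftrightarrow> preadditive C \<and> (\<exists>z. zero_object C z) \<and>
     (\<forall>a \<in> Obj C. \<forall>b \<in> Obj C. \<exists>s i1 i2 p1 p2. is_biproduct C a b s i1 i2 p1 p2)"

definition is_kernel :: "('o, 'm) addcat \<Rightarrow> 'm \<Rightarrow> 'm \<Rightarrow> bool" where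
  "is_kernel C i p \<longleftrightarrow> i \<in> Arr C \<and> p \<in> Arr C \<and> Cod C i = Dom C p \<and>
     Comp C p i = Zero C (Dom C i) (Cod C p) \<and>
     (\<forall>t \<in> Obj C. \<forall>f \<in> hom C t (Dom C p).
        Comp C p f = Zero C t (Cod C p) \<longrightarrow> (\<exists>!g. g \<in> hom C t (Dom C i) \<and> Comp C i g = f))"

definition is_cokernel :: "('o, 'm) addcat \<Rightarrow> 'm \<Rightarrow> 'm \<Rightarrow> bool" where
  "is_cokernel C p i \<longleftrightarrow> i \<in> Arr C \<and> p \<in> Arr C \<and> Cod C i = Dom C p \<and>
     Comp C p i = Zero C (Dom C i) (Cod C p) \<and>
     (\<forall>t \<in> Obj C. \<forall>f \<in> hom C (Cod C i) t.
        Comp C f i = Zero C (Dom C i) t \<longrightarrow> (\<exists>!g. g \<in> hom C (Cod C p) t \<and> Comp C g p = f))"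

definition has_kernel :: "('o, 'm) addcat \<Rightarrow> 'm \<Rightarrow> bool" where
  "has_kernel C p \<longleftrightarrow> (\<exists>i. is_kernel C i p)"

definition kernel_cokernel_pair :: "('o, 'm) addcat \<Rightarrow> 'm \<Rightarrow> 'm \<Rightarrow> bool" where
  "kernel_cokernel_pair C i p \<longleftrightarrow> is_kernel C i p \<and> is_cokernel C p i"

definition iso :: "('o, 'm) addcat \<Rightarrow> 'm \<Rightarrow> bool" where
  "iso C f \<longleftrightarrow> f \<in> Arr C \<and> (\<exists>g \<in> hom C (Cod C f) (Dom C f).
     Comp C g f = Id C (Dom C f) \<and> Comp C f g = Id C (Cod C f))"

definition iso_pairs :: "('o, 'm) addcat \<Rightarrow> 'm \<Rightarrow> 'm \<Rightarrow> 'm \<Rightarrow> 'm \<Rightarrow> bool" where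
  "iso_pairs C i p i' p' \<longleftrightarrow> (\<exists>a b c.
     a \<in> hom C (Dom C i) (Dom C i') \<and> b \<in> hom C (Cod C i) (Cod C i') \<and>
     c \<in> hom C (Cod C p) (Cod C p') \<and> iso C a \<and> iso C b \<and> iso C c \<and>
     Comp C b i = Comp C i' a \<and> Comp C c p = Comp C p' b)"

definition is_pullback ::
  "('o, 'm) addcat \<Rightarrow> 'm \<Rightarrow> 'm \<Rightarrow> 'm \<Rightarrow> 'm \<Rightarrow> bool" where
  "is_pullback C p f p' f' \<longleftrightarrow> p \<in> Arr C \<and> f \<in> Arr C \<and> p' \<in> Arr C \<and> f' \<in> Arr C \<and>
     Cod C p = Cod C f \<and> Cod C p' = Dom C f \<and> Cod C f' = Dom C p \<and> Dom C p' = Dom C f' \<and>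
     Comp C p f' = Comp C f p' \<and>
     (\<forall>t \<in> Obj C. \<forall>g \<in> hom C t (Dom C f). \<forall>h \<in> hom C t (Dom C p).
        Comp C f g = Comp C p h \<longrightarrow>
        (\<exists>!u. u \<in> hom C t (Dom C p') \<and> Comp C p' u = g \<and> Comp C f' u = h))"

definition conflation_category :: "('o, 'm) addcat \<Rightarrow> ('m \<times> 'm) set \<Rightarrow> bool" where
  "conflation_category C Conf \<longleftrightarrow> additive C \<and>
     (\<forall>(i, p) \<in> Conf. kernel_cokernel_pair C i p) \<and>
     (\<forall>i p i' p'. (i, p) \<in> Conf \<and> kernel_cokernel_pair C i' p' \<and> iso_pairs C i p i' p'
        \<longrightarrow> (i', p') \<in> Conf)"

definition deflation :: "('m \<times> 'm) set \<Rightarrow> 'm \<Rightarrow> bool" where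
  "deflation Conf p \<longleftrightarrow> (\<exists>i. (i, p) \<in> Conf)"

definition inflation :: "('m \<times> 'm) set \<Rightarrow> 'm \<Rightarrow> bool" where
  "inflation Conf i \<longleftrightarrow> (\<exists>p. (i, p) \<in> Conf)"

definition right_exact :: "('o, 'm) addcat \<Rightarrow> ('m \<times> 'm) set \<Rightarrow> bool" where
  "right_exact C Conf \<longleftrightarrow> conflation_category C Conf \<and>
     (\<forall>z. zero_object C z \<longrightarrow> deflation Conf (Id C z)) \<and>
     (\<forall>p q. deflation Conf p \<and> deflation Conf q \<and> Cod C p = Dom C q
        \<longrightarrow> deflation Conf (Comp C q p)) \<and>
     (\<forall>p f. deflation Conf p \<and> f \<in> Arr C \<and> Cod C f = Cod C p \<longrightarrow>
        (\<exists>p' f'. is_pullback C p f p' f' \<and> deflation Conf p'))"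

definition axiom_R3 :: "('o, 'm) addcat \<Rightarrow> ('m \<times> 'm) set \<Rightarrow> bool" where
  "axiom_R3 C Conf \<longleftrightarrow>
     (\<forall>i p. i \<in> Arr C \<and> p \<in> Arr C \<and> Cod C i = Dom C p \<and> has_kernel C p \<and>
        deflation Conf (Comp C p i) \<longrightarrow> deflation Conf p)"

end

theory Submission
  imports Defs
begin

text \<open>
  Kernels and cokernels pass from the pair \<xi>, \<eta> to its retract \<alpha>, \<beta>: factorizations
  through \<xi> (resp. \<eta>) are transported along the retraction maps, and the cokernel case is
  the kernel case in the opposite category. To see that \<beta> is a deflation, pull the
  deflation \<eta> back along c1; the resulting deflation p satisfies p = \<beta> \<circ> b2 \<circ> f, so
  \<beta> is a deflation by R3. Finally a deflation determines its kernel up to isomorphism, so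
  (\<alpha>, \<beta>) is isomorphic to a conflation.
\<close>

lemma category_if_preadditive: "preadditive C \<Longrightarrow> category C"
  unfolding preadditive_def by simp

lemma preadditive_if_conflation_category: "conflation_category C Conf \<Longrightarrow> preadditive C"
  unfolding conflation_category_def additive_def by simp

lemma hom_objs: "category C \<Longrightarrow> f \<in> hom C a b \<Longrightarrow> a \<in> Obj C \<and> b \<in> Obj C"
  unfolding category_def hom_def by auto

lemma comp_in_hom: "category C \<Longrightarrow> f \<in> hom C a b \<Longrightarrow> g \<in> hom C b c \<Longrightarrow> Comp C g f \<in> hom C a c"
  using hom_objs[of C f a b] hom_objs[of C g b c] unfolding category_def by blast

lemma id_in_hom: "category C \<Longrightarrow> a \<in> Obj C \<Longrightarrow> Id C a \<in> hom C a a"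
  unfolding category_def by blast

lemma comp_id_left: "category C \<Longrightarrow> f \<in> hom C a b \<Longrightarrow> Comp C (Id C b) f = f"
  using hom_objs[of C f a b] unfolding category_def by blast

lemma comp_id_right: "category C \<Longrightarrow> f \<in> hom C a b \<Longrightarrow> Comp C f (Id C a) = f"
  using hom_objs[of C f a b] unfolding category_def by blast

lemma comp_assoc: "category C \<Longrightarrow> f \<in> hom C a b \<Longrightarrow> g \<in> hom C b c \<Longrightarrow> h \<in> hom C c d \<Longrightarrow>
    Comp C h (Comp C g f) = Comp C (Comp C h g) f"
  using hom_objs[of C f a b] hom_objs[of C g b c] hom_objs[of C h c d]
  unfolding category_def by blast

lemma iso_Id: "category C \<Longrightarrow> a \<in> Obj C \<Longrightarrow> iso C (Id C a)"
  using id_in_hom[of C a] comp_id_left[of C "Id C a" a a] unfolding iso_def hom_def by auto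

definition op_cat :: "('o, 'm) addcat \<Rightarrow> ('o, 'm) addcat" where
  "op_cat C = C\<lparr>Dom := Cod C, Cod := Dom C, Comp := \<lambda>g f. Comp C f g, Zero := \<lambda>a b. Zero C b a\<rparr>"

lemma op_cat_simps [simp]:
  "Obj (op_cat C) = Obj C" "Arr (op_cat C) = Arr C" "Dom (op_cat C) = Cod C" "Cod (op_cat C) = Dom C"
  "Id (op_cat C) = Id C" "Comp (op_cat C) g f = Comp C f g" "Add (op_cat C) = Add C"
  "Neg (op_cat C) = Neg C" "Zero (op_cat C) a b = Zero C b a"
  by (simp_all add: op_cat_def)

lemma hom_op_cat [simp]: "hom (op_cat C) a b = hom C b a"
  by (auto simp: hom_def)

lemma category_op_cat: "category C \<Longrightarrow> category (op_cat C)"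
  unfolding category_def hom_op_cat op_cat_simps by (elim conjE) (intro conjI ballI; simp)

lemma preadditive_op_cat:
  assumes "preadditive C"
  shows "preadditive (op_cat C)"
proof -
  have "category (op_cat C)"
    using assms by (intro category_op_cat category_if_preadditive)
  then show ?thesis unfolding preadditive_def[of "op_cat C"] hom_op_cat op_cat_simps
    using assms unfolding preadditive_def by (intro conjI ballI; elim conjE; blast)
qed

lemma is_kernel_op_cat: "is_kernel (op_cat C) p i \<longleftrightarrow> is_cokernel C p i"
  unfolding is_kernel_def is_cokernel_def by auto

lemma add_self_eq_zero:
  assumes pa: "preadditive C" and "a \<in> Obj C" "b \<in> Obj C" "w \<in> hom C a b"
    and idem: "Add C w w = w"
  shows "w = Zero C a b"
proof -
  have neg: "Neg C w \<in> hom C a b" "Add C w (Neg C w) = Zero C a b"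
    using assms unfolding preadditive_def by simp_all
  have "Add C (Add C w w) (Neg C w) = Add C w (Add C w (Neg C w))"
    using assms neg unfolding preadditive_def by blast
  then show ?thesis
    using idem neg assms unfolding preadditive_def by metis
qed

lemma comp_zero_right:
  assumes pa: "preadditive C" and h: "h \<in> hom C b c" and a: "a \<in> Obj C"
  shows "Comp C h (Zero C a b) = Zero C a c"
proof -
  have cat: "category C" using pa by (rule category_if_preadditive)
  have ob: "b \<in> Obj C" "c \<in> Obj C" using hom_objs[OF cat h] by auto
  have z: "Zero C a b \<in> hom C a b" and zz: "Add C (Zero C a b) (Zero C a b) = Zero C a b"
    using pa a ob unfolding preadditive_def by simp_all
  have "Add C (Comp C h (Zero C a b)) (Comp C h (Zero C a b)) = Comp C h (Zero C a b)"
    using pa a ob z h zz unfolding preadditive_def by metis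
  then show ?thesis
    by (rule add_self_eq_zero[OF pa a ob(2) comp_in_hom[OF cat z h]])
qed

lemma comp_zero_left:
  "preadditive C \<Longrightarrow> k \<in> hom C a b \<Longrightarrow> c \<in> Obj C \<Longrightarrow> Comp C (Zero C b c) k = Zero C a c"
  using comp_zero_right[OF preadditive_op_cat, of C k b a c] by simp

locale pair_retract =
  fixes C :: "('o, 'm) addcat"
    and A B Ca X Y Z :: 'o
    and \<alpha> \<beta> \<xi> \<eta> a1 a2 b1 b2 c1 c2 :: 'm
  assumes preadditive: "preadditive C"
    and homs: "\<alpha> \<in> hom C A B" "\<beta> \<in> hom C B Ca" "\<xi> \<in> hom C X Y" "\<eta> \<in> hom C Y Z"
      "a1 \<in> hom C A X" "a2 \<in> hom C X A" "b1 \<in> hom C B Y" "b2 \<in> hom C Y B"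
      "c1 \<in> hom C Ca Z" "c2 \<in> hom C Z Ca"
    and retractions: "Comp C a2 a1 = Id C A" "Comp C b2 b1 = Id C B" "Comp C c2 c1 = Id C Ca"
    and squares: "Comp C \<xi> a1 = Comp C b1 \<alpha>" "Comp C \<eta> b1 = Comp C c1 \<beta>"
      "Comp C \<alpha> a2 = Comp C b2 \<xi>" "Comp C \<beta> b2 = Comp C c2 \<eta>"
begin

lemma category: "category C"
  using preadditive by (rule category_if_preadditive)

lemma dual: "pair_retract (op_cat C) Ca B A Z Y X \<beta> \<alpha> \<eta> \<xi> c2 c1 b2 b1 a2 a1"
  using preadditive_op_cat[OF preadditive] homs retractions squares
  by unfold_locales simp_all

lemma comp_zero:
  assumes "Comp C \<eta> \<xi> = Zero C X Z"
  shows "Comp C \<beta> \<alpha> = Zero C A Ca"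
proof -
  have ob: "A \<in> Obj C" "Z \<in> Obj C" using homs hom_objs[OF category] by blast+
  have "Comp C c1 (Comp C \<beta> \<alpha>) = Comp C (Comp C c1 \<beta>) \<alpha>"
    using comp_assoc[OF category homs(1,2,9)] .
  also have "\<dots> = Comp C \<eta> (Comp C b1 \<alpha>)"
    using comp_assoc[OF category homs(1,7,4)] squares(2) by simp
  also have "\<dots> = Comp C (Comp C \<eta> \<xi>) a1"
    using comp_assoc[OF category homs(5,3,4)] squares(1) by simp
  also have "\<dots> = Zero C A Z"
    using assms comp_zero_left[OF preadditive homs(5) ob(2)] by simp
  finally have c1_zero: "Comp C c1 (Comp C \<beta> \<alpha>) = Zero C A Z" .
  have \<beta>\<alpha>: "Comp C \<beta> \<alpha> \<in> hom C A Ca" using comp_in_hom[OF category homs(1,2)] .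
  have "Comp C \<beta> \<alpha> = Comp C c2 (Comp C c1 (Comp C \<beta> \<alpha>))"
    using retractions(3) comp_id_left[OF category \<beta>\<alpha>] comp_assoc[OF category \<beta>\<alpha> homs(9,10)]
    by simp
  also have "\<dots> = Zero C A Ca"
    using c1_zero comp_zero_right[OF preadditive homs(10) ob(1)] by simp
  finally show ?thesis .
qed

lemma is_kernel:
  assumes ker: "is_kernel C \<xi> \<eta>"
  shows "is_kernel C \<alpha> \<beta>"
proof -
  have dom_cod: "\<alpha> \<in> Arr C" "\<beta> \<in> Arr C" "Dom C \<alpha> = A" "Cod C \<alpha> = B" "Dom C \<beta> = B" "Cod C \<beta> = Ca"
    "Dom C \<xi> = X" "Dom C \<eta> = Y" "Cod C \<eta> = Z"
    using homs by (auto simp: hom_def)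
  have lift: "\<exists>!g. g \<in> hom C t X \<and> Comp C \<xi> g = f"
    if "t \<in> Obj C" "f \<in> hom C t Y" "Comp C \<eta> f = Zero C t Z" for t f
    using ker that dom_cod unfolding is_kernel_def by simp
  have "Comp C \<beta> \<alpha> = Zero C A Ca"
    using ker dom_cod by (intro comp_zero) (simp add: is_kernel_def)
  moreover have "\<exists>!g. g \<in> hom C t A \<and> Comp C \<alpha> g = f"
    if t: "t \<in> Obj C" and f: "f \<in> hom C t B" and \<beta>f: "Comp C \<beta> f = Zero C t Ca" for t f
  proof -
    have b1f: "Comp C b1 f \<in> hom C t Y" using comp_in_hom[OF category f homs(7)] .
    have "Comp C \<eta> (Comp C b1 f) = Comp C c1 (Comp C \<beta> f)"
      using comp_assoc[OF category f homs(7,4)] comp_assoc[OF category f homs(2,9)] squares(2)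
      by simp
    also have "\<dots> = Zero C t Z" using \<beta>f comp_zero_right[OF preadditive homs(9) t] by simp
    finally obtain g where g: "g \<in> hom C t X" "Comp C \<xi> g = Comp C b1 f"
      and g_unique: "\<And>g'. g' \<in> hom C t X \<Longrightarrow> Comp C \<xi> g' = Comp C b1 f \<Longrightarrow> g' = g"
      using lift[OF t b1f] by blast
    show ?thesis
    proof (rule ex1I[of _ "Comp C a2 g"])
      have "Comp C \<alpha> (Comp C a2 g) = Comp C b2 (Comp C \<xi> g)"
        using comp_assoc[OF category g(1) homs(6,1)] comp_assoc[OF category g(1) homs(3,8)]
          squares(3) by simp
      also have "\<dots> = f"
        using g(2) comp_assoc[OF category f homs(7,8)] retractions(2) comp_id_left[OF category f]
        by simp
      finally show "Comp C a2 g \<in> hom C t A \<and> Comp C \<alpha> (Comp C a2 g) = f"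
        using comp_in_hom[OF category g(1) homs(6)] by simp
    next
      fix g' assume g': "g' \<in> hom C t A \<and> Comp C \<alpha> g' = f"
      have "Comp C \<xi> (Comp C a1 g') = Comp C b1 f"
        using g' comp_assoc[OF category _ homs(5,3)] comp_assoc[OF category _ homs(1,7)] squares(1)
        by metis
      then have "Comp C a1 g' = g" using g_unique comp_in_hom[OF category _ homs(5)] g' by blast
      then show "g' = Comp C a2 g"
        using g' comp_assoc[OF category _ homs(5,6)] retractions(1) comp_id_left[OF category]
        by metis
    qed
  qed
  ultimately show ?thesis
    using dom_cod unfolding is_kernel_def by simp
qed

lemma is_cokernel: "is_cokernel C \<eta> \<xi> \<Longrightarrow> is_cokernel C \<beta> \<alpha>"
  using pair_retract.is_kernel[OF dual] by (simp add: is_kernel_op_cat)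

lemma kernel_cokernel_pair: "kernel_cokernel_pair C \<xi> \<eta> \<Longrightarrow> kernel_cokernel_pair C \<alpha> \<beta>"
  unfolding kernel_cokernel_pair_def using is_kernel is_cokernel by blast

end

lemma kernels_iso:
  assumes pa: "preadditive C" and ker_i: "is_kernel C i \<beta>" and ker_\<alpha>: "is_kernel C \<alpha> \<beta>"
    and homs: "\<alpha> \<in> hom C A B" "i \<in> hom C D B" "\<beta> \<in> hom C B Ca"
  shows "\<exists>a \<in> hom C D A. iso C a \<and> i = Comp C \<alpha> a"
proof -
  have cat: "category C" using pa by (rule category_if_preadditive)
  have ob: "A \<in> Obj C" "D \<in> Obj C" using homs hom_objs[OF cat] by blast+
  have dom_cod: "Dom C \<alpha> = A" "Dom C i = D" "Dom C \<beta> = B" "Cod C \<beta> = Ca"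
    using homs by (auto simp: hom_def)
  have lift_\<alpha>: "\<exists>!g. g \<in> hom C t A \<and> Comp C \<alpha> g = f"
    if "t \<in> Obj C" "f \<in> hom C t B" "Comp C \<beta> f = Zero C t Ca" for t f
    using ker_\<alpha> that dom_cod unfolding is_kernel_def by simp
  have lift_i: "\<exists>!g. g \<in> hom C t D \<and> Comp C i g = f"
    if "t \<in> Obj C" "f \<in> hom C t B" "Comp C \<beta> f = Zero C t Ca" for t f
    using ker_i that dom_cod unfolding is_kernel_def by simp
  have zero_\<alpha>: "Comp C \<beta> \<alpha> = Zero C A Ca" and zero_i: "Comp C \<beta> i = Zero C D Ca"
    using ker_\<alpha> ker_i dom_cod unfolding is_kernel_def by simp_all
  obtain a where a: "a \<in> hom C D A" "Comp C \<alpha> a = i"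
    using lift_\<alpha>[OF ob(2) homs(2) zero_i] by blast
  obtain a' where a': "a' \<in> hom C A D" "Comp C i a' = \<alpha>"
    using lift_i[OF ob(1) homs(1) zero_\<alpha>] by blast
  \<comment> \<open>Both composites factor a kernel through itself, so uniqueness identifies them with identities.\<close>
  have "Comp C a a' = Id C A"
    using lift_\<alpha>[OF ob(1) homs(1) zero_\<alpha>] comp_in_hom[OF cat a'(1) a(1)] id_in_hom[OF cat ob(1)]
      comp_assoc[OF cat a'(1) a(1) homs(1)] a a' comp_id_right[OF cat homs(1)]
    by metis
  moreover have "Comp C a' a = Id C D"
    using lift_i[OF ob(2) homs(2) zero_i] comp_in_hom[OF cat a(1) a'(1)] id_in_hom[OF cat ob(2)]
      comp_assoc[OF cat a(1) a'(1) homs(2)] a a' comp_id_right[OF cat homs(2)]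
    by metis
  ultimately have "iso C a" using a(1) a'(1) unfolding iso_def hom_def by auto
  then show ?thesis using a by auto
qed

lemma conflation_if_kernel_cokernel_pair:
  assumes cc: "conflation_category C Conf" and "deflation Conf \<beta>"
    and kc: "kernel_cokernel_pair C \<alpha> \<beta>"
  shows "(\<alpha>, \<beta>) \<in> Conf"
proof -
  have pa: "preadditive C" using cc by (rule preadditive_if_conflation_category)
  have cat: "category C" using pa by (rule category_if_preadditive)
  obtain i where i: "(i, \<beta>) \<in> Conf" using \<open>deflation Conf \<beta>\<close> unfolding deflation_def by blast
  have ker_i: "is_kernel C i \<beta>"
    using cc i unfolding conflation_category_def kernel_cokernel_pair_def by blast
  have ker_\<alpha>: "is_kernel C \<alpha> \<beta>" using kc unfolding kernel_cokernel_pair_def by blast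
  define A B Ca D where "A = Dom C \<alpha>" "B = Cod C \<alpha>" "Ca = Cod C \<beta>" "D = Dom C i"
  have homs: "\<alpha> \<in> hom C A B" "\<beta> \<in> hom C B Ca" "i \<in> hom C D B"
    using ker_\<alpha> ker_i unfolding A_B_Ca_D_def is_kernel_def hom_def by auto
  have ob: "B \<in> Obj C" "Ca \<in> Obj C" using homs(2) hom_objs[OF cat] by blast+
  obtain a where a: "a \<in> hom C D A" "iso C a" "i = Comp C \<alpha> a"
    using kernels_iso[OF pa ker_i ker_\<alpha> homs(1,3,2)] by blast
  have "iso_pairs C i \<beta> \<alpha> \<beta>"
    unfolding iso_pairs_def
  proof (intro exI conjI)
    show "a \<in> hom C (Dom C i) (Dom C \<alpha>)" using a(1) A_B_Ca_D_def by simp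
    show "Id C B \<in> hom C (Cod C i) (Cod C \<alpha>)" using id_in_hom[OF cat ob(1)] homs
      by (simp add: hom_def)
    show "Id C Ca \<in> hom C (Cod C \<beta>) (Cod C \<beta>)" using id_in_hom[OF cat ob(2)] A_B_Ca_D_def by simp
    show "iso C a" "iso C (Id C B)" "iso C (Id C Ca)" using a(2) iso_Id[OF cat] ob by auto
    show "Comp C (Id C B) i = Comp C \<alpha> a" using comp_id_left[OF cat homs(3)] a(3) by simp
    show "Comp C (Id C Ca) \<beta> = Comp C \<beta> (Id C B)"
      using comp_id_left[OF cat homs(2)] comp_id_right[OF cat homs(2)] by simp
  qed
  then show ?thesis using cc i kc unfolding conflation_category_def by blast
qed

lemma deflation_if_retract:
  assumes re: "right_exact C Conf" and R3: "axiom_R3 C Conf"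
    and "has_kernel C \<beta>" and "deflation Conf \<eta>"
    and homs: "\<beta> \<in> hom C B Ca" "\<eta> \<in> hom C Y Z" "b2 \<in> hom C Y B" "c1 \<in> hom C Ca Z"
      "c2 \<in> hom C Z Ca"
    and retraction: "Comp C c2 c1 = Id C Ca" and square: "Comp C \<beta> b2 = Comp C c2 \<eta>"
  shows "deflation Conf \<beta>"
proof -
  have cat: "category C"
    using re unfolding right_exact_def
    by (intro category_if_preadditive preadditive_if_conflation_category) blast
  obtain p f where pb: "is_pullback C \<eta> c1 p f" and "deflation Conf p"
    using re \<open>deflation Conf \<eta>\<close> homs unfolding right_exact_def hom_def by force
  define P where "P = Dom C p"
  have p: "p \<in> hom C P Ca" and f: "f \<in> hom C P Y" and pb_square: "Comp C \<eta> f = Comp C c1 p"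
    using pb homs unfolding is_pullback_def P_def hom_def by auto
  have b2f: "Comp C b2 f \<in> hom C P B" using comp_in_hom[OF cat f homs(3)] .
  have "Comp C \<beta> (Comp C b2 f) = Comp C c2 (Comp C \<eta> f)"
    using comp_assoc[OF cat f homs(3,1)] comp_assoc[OF cat f homs(2,5)] square by simp
  also have "\<dots> = p"
    using pb_square comp_assoc[OF cat p homs(4,5)] retraction comp_id_left[OF cat p] by simp
  finally have "Comp C \<beta> (Comp C b2 f) = p" .
  then show ?thesis
    using R3 \<open>deflation Conf p\<close> \<open>has_kernel C \<beta>\<close> b2f homs(1)
    unfolding axiom_R3_def hom_def by auto
qed

theorem proposition2p6:
  fixes C :: "('o, 'm) addcat" and Conf :: "('m \<times> 'm) set"
  assumes "right_exact C Conf" and "axiom_R3 C Conf"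
    and "A \<in> Obj C" "B \<in> Obj C" "Ca \<in> Obj C" "X \<in> Obj C" "Y \<in> Obj C" "Z \<in> Obj C"
    and "\<alpha> \<in> hom C A B" "\<beta> \<in> hom C B Ca" "\<xi> \<in> hom C X Y" "\<eta> \<in> hom C Y Z"
    and "a1 \<in> hom C A X" "a2 \<in> hom C X A"
    and "b1 \<in> hom C B Y" "b2 \<in> hom C Y B"
    and "c1 \<in> hom C Ca Z" "c2 \<in> hom C Z Ca"
    and "Comp C a2 a1 = Id C A" "Comp C b2 b1 = Id C B" "Comp C c2 c1 = Id C Ca"
    and "Comp C \<xi> a1 = Comp C b1 \<alpha>" "Comp C \<eta> b1 = Comp C c1 \<beta>"
    and "Comp C \<alpha> a2 = Comp C b2 \<xi>" "Comp C \<beta> b2 = Comp C c2 \<eta>"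
    and "(\<xi>, \<eta>) \<in> Conf"
  shows "(\<alpha>, \<beta>) \<in> Conf"
proof -
  have cc: "conflation_category C Conf" using assms(1) unfolding right_exact_def by blast
  interpret pair_retract C A B Ca X Y Z \<alpha> \<beta> \<xi> \<eta> a1 a2 b1 b2 c1 c2
    using preadditive_if_conflation_category[OF cc] assms(9-25) by unfold_locales
  have kc: "kernel_cokernel_pair C \<alpha> \<beta>"
    using cc assms(26) kernel_cokernel_pair unfolding conflation_category_def by blast
  have "deflation Conf \<beta>"
  proof (rule deflation_if_retract[OF assms(1,2) _ _ assms(10,12,16-18,21,25)])
    show "has_kernel C \<beta>" using kc unfolding kernel_cokernel_pair_def has_kernel_def by blast
    show "deflation Conf \<eta>" using assms(26) unfolding deflation_def by blast
  qed
  then show ?thesis by (rule conflation_if_kernel_cokernel_pair[OF cc _ kc])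
qed

end
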